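(* Let $0<\gamma\le1$, $0<\delta<1$, $\delta<\alpha<1$, $m\ge1$ an integer, $\Lambda_1=(0,1)$, and $\psi(t)=t^{1/\gamma}$. Assume $v\in{}_0H^{\delta/2,\psi}(\Lambda_1)\cap B^m_{\omega^{-\alpha,-1}}(\Lambda_1)$. Then (i) $\|v\|_{L^2_\psi(\Lambda_1)}\le c\|v\|_{L^2_{\omega^{-\alpha,-1}}(\Lambda_1)}$ and (ii) $\big({}^CD^{\delta,\psi}_tv,v\big)_{L^2_\psi(\Lambda_1)}\le c\,\|v'\|_{L^2_{\omega^{1-\alpha,0}}(\Lambda_1)}\|v\|_{L^2_{\omega^{-\alpha,-1}}(\Lambda_1)}$, with $c$ independent of $v$.
   Context: $(v,w)_{L^2_\psi(\Lambda_1)}=\int_0^1vw\psi'(t)dt$. For weights $\omega^{a,b}(t)=(1-t)^a t^b$ on $(0,1)$ (up to constant factors from the affine map to $(-1,1)$), $L^2_{\omega^{a,b}}(\Lambda_1)$ is the weighted $L^2$ space with norm $(\int_0^1|v|^2\omega^{a,b}dt)^{1/2}$, and $B^m_{\omega^{-\alpha,-1}}(\Lambda_1)=\{v:\partial_t^kv\in L^2_{\omega^{-\alpha+k,-1+k}}(\Lambda_1),\,0\le k\le m\}$. The $\psi$-Caputo derivative is ${}^CD^{\delta,\psi}_tv(t)=\frac{1}{\Gamma(1-\delta)}\int_0^t(\psi(t)-\psi(z))^{-\delta}v'(z)dz$. $H^{\delta/2,\psi}(\Lambda_1)$ is the space of restrictions to $\Lambda_1$ of functions $v_e$ on $\mathbb{R}$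 with $\int|v_e|^2\psi'<\infty$ and $(1+|\xi|^{\delta/2})\mathcal{F}(v_e\circ\psi^{-1})\in L^2(\mathbb{R})$, normed by the infimum over extensions of $(\int|v_e|^2\psi'+\||\xi|^{\delta/2}\mathcal{F}(v_e\circ\psi^{-1})\|^2_{L^2})^{1/2}$; ${}_0H^{\delta/2,\psi}(\Lambda_1)$ is the closure in this norm of smooth functions with compact support in $(0,1]$. *)

theory Defs
  imports "HOL-Analysis.Analysis"
begin

text \<open>The map psi(t) = t^(1/gamma), extended to the real line as an odd homeomorphism,
  its derivative and its inverse.\<close>
definition psi :: "real \<Rightarrow> real \<Rightarrow> real" where
  "psi \<gamma> t = sgn t * \<bar>t\<bar> powr (1 / \<gamma>)"

definition psi_d :: "real \<Rightarrow> real \<Rightarrow> real" where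
  "psi_d \<gamma> t = (1 / \<gamma>) * \<bar>t\<bar> powr (1 / \<gamma> - 1)"

definition psi_inv :: "real \<Rightarrow> real \<Rightarrow> real" where
  "psi_inv \<gamma> s = sgn s * \<bar>s\<bar> powr \<gamma>"

definition omega :: "real \<Rightarrow> real \<Rightarrow> real \<Rightarrow> real" where
  "omega a b t = (1 - t) powr a * t powr b"

definition in_L2w :: "real \<Rightarrow> real \<Rightarrow> (real \<Rightarrow> real) \<Rightarrow> bool" where
  "in_L2w a b v \<longleftrightarrow> set_borel_measurable lborel {0<..<1} v \<and>
     set_integrable lborel {0<..<1} (\<lambda>t. (v t)\<^sup>2 * omega a b t)"

definition norm_L2w :: "real \<Rightarrow> real \<Rightarrow> (real \<Rightarrow> real) \<Rightarrow> real" where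
  "norm_L2w a b v = sqrt (\<integral>t\<in>{0<..<1}. (v t)\<^sup>2 * omega a b t \<partial>lborel)"

definition inner_L2psi :: "real \<Rightarrow> (real \<Rightarrow> real) \<Rightarrow> (real \<Rightarrow> real) \<Rightarrow> real" where
  "inner_L2psi \<gamma> v w = (\<integral>t\<in>{0<..<1}. v t * w t * psi_d \<gamma> t \<partial>lborel)"

definition norm_L2psi :: "real \<Rightarrow> (real \<Rightarrow> real) \<Rightarrow> real" where
  "norm_L2psi \<gamma> v = sqrt (inner_L2psi \<gamma> v v)"

text \<open>psi-Caputo derivative of order delta, given the derivative dv of v.\<close>
definition caputo_psi :: "real \<Rightarrow> real \<Rightarrow> (real \<Rightarrow> real) \<Rightarrow> real \<Rightarrow> real" where
  "caputo_psi \<gamma> \<delta> dv t =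
     1 / Gamma (1 - \<delta>) * (\<integral>z\<in>{0<..<t}. (psi \<gamma> t - psi \<gamma> z) powr (- \<delta>) * dv z \<partial>lborel)"

definition smooth :: "(real \<Rightarrow> real) \<Rightarrow> bool" where
  "smooth \<phi> \<longleftrightarrow> (\<forall>k x. ((deriv ^^ k) \<phi>) differentiable (at x))"

text \<open>Test functions: smooth with compact support in R; in (0,1); in (0,1] (the latter
  only matters through the restriction to (0,1)).\<close>
definition test_R :: "(real \<Rightarrow> real) \<Rightarrow> bool" where
  "test_R \<phi> \<longleftrightarrow> smooth \<phi> \<and> (\<exists>R. \<forall>x. R < \<bar>x\<bar> \<longrightarrow> \<phi> x = 0)"

definition test_01 :: "(real \<Rightarrow> real) \<Rightarrow> bool" where
  "test_01 \<phi> \<longleftrightarrow> smooth \<phi> \<and> (\<exists>a b. 0 < a \<and> b < 1 \<and> (\<forall>x. x \<notin> {a..b} \<longrightarrow> \<phi> x = 0))"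

definition test_0_1c :: "(real \<Rightarrow> real) \<Rightarrow> bool" where
  "test_0_1c \<phi> \<longleftrightarrow> smooth \<phi> \<and> (\<exists>a>0. \<forall>x. x < a \<longrightarrow> \<phi> x = 0)"

definition weak_deriv :: "nat \<Rightarrow> (real \<Rightarrow> real) \<Rightarrow> (real \<Rightarrow> real) \<Rightarrow> bool" where
  "weak_deriv k v g \<longleftrightarrow> (\<forall>\<phi>. test_01 \<phi> \<longrightarrow>
     set_integrable lborel {0<..<1} (\<lambda>t. v t * (deriv ^^ k) \<phi> t) \<and>
     set_integrable lborel {0<..<1} (\<lambda>t. g t * \<phi> t) \<and>
     (\<integral>t\<in>{0<..<1}. v t * (deriv ^^ k) \<phi> t \<partial>lborel) =
       (-1) ^ k * (\<integral>t\<in>{0<..<1}. g t * \<phi> t \<partial>lborel))"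

text \<open>Fourier transform (unitary convention) of an integrable test function, and the
  Fourier transform of a general (L^2) function characterised by the multiplication formula
  against test functions (equivalently, in the sense of tempered distributions).\<close>
definition fourier :: "(real \<Rightarrow> real) \<Rightarrow> real \<Rightarrow> complex" where
  "fourier \<phi> x = (1 / sqrt (2 * pi)) * (\<integral>\<xi>. complex_of_real (\<phi> \<xi>) * cis (- (x * \<xi>)) \<partial>lborel)"

definition is_fourier :: "(real \<Rightarrow> real) \<Rightarrow> (real \<Rightarrow> complex) \<Rightarrow> bool" where
  "is_fourier w W \<longleftrightarrow> W \<in> borel_measurable lborel \<and> (\<forall>\<phi>. test_R \<phi> \<longrightarrow>
     integrable lborel (\<lambda>\<xi>. W \<xi> * complex_of_real (\<phi> \<xi>)) \<and>
     integrable lborel (\<lambda>x. complex_of_real (w x) * fourier \<phi> x) \<and>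
     (\<integral>\<xi>. W \<xi> * complex_of_real (\<phi> \<xi>) \<partial>lborel) =
       (\<integral>x. complex_of_real (w x) * fourier \<phi> x \<partial>lborel))"

text \<open>An admissible extension u (to R) with W = F(u o psi^{-1}) for the space H^{delta/2,psi},
  and the square of the corresponding norm expression.\<close>
definition H_ext :: "real \<Rightarrow> real \<Rightarrow> (real \<Rightarrow> real) \<Rightarrow> (real \<Rightarrow> complex) \<Rightarrow> bool" where
  "H_ext \<gamma> \<delta> u W \<longleftrightarrow> u \<in> borel_measurable lborel \<and>
     integrable lborel (\<lambda>t. (u t)\<^sup>2 * psi_d \<gamma> t) \<and>
     is_fourier (u \<circ> psi_inv \<gamma>) W \<and>
     integrable lborel (\<lambda>\<xi>. (1 + \<bar>\<xi>\<bar> powr (\<delta> / 2))\<^sup>2 * (cmod (W \<xi>))\<^sup>2)"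

definition H_ext_sq :: "real \<Rightarrow> real \<Rightarrow> (real \<Rightarrow> real) \<Rightarrow> (real \<Rightarrow> complex) \<Rightarrow> real" where
  "H_ext_sq \<gamma> \<delta> u W = (\<integral>t. (u t)\<^sup>2 * psi_d \<gamma> t \<partial>lborel) +
     (\<integral>\<xi>. \<bar>\<xi>\<bar> powr \<delta> * (cmod (W \<xi>))\<^sup>2 \<partial>lborel)"

text \<open>v belongs to the closure 0H^{delta/2,psi}(0,1) of smooth functions with compact support
  in (0,1]: for every eps there is such a phi with ||v - phi||_H < eps, the norm being the
  infimum over extensions.\<close>
definition in_0H :: "real \<Rightarrow> real \<Rightarrow> (real \<Rightarrow> real) \<Rightarrow> bool" where
  "in_0H \<gamma> \<delta> v \<longleftrightarrow> (\<forall>\<epsilon>>0. \<exists>\<phi> u W. test_0_1c \<phi> \<and>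
     (\<forall>t\<in>{0<..<1}. u t = v t - \<phi> t) \<and> H_ext \<gamma> \<delta> u W \<and> H_ext_sq \<gamma> \<delta> u W < \<epsilon>\<^sup>2)"

text \<open>v in B^m_{omega^{-alpha,-1}}(0,1) with g k its k-th weak derivative (g 0 = v).\<close>
definition in_Bm :: "nat \<Rightarrow> real \<Rightarrow> (real \<Rightarrow> real) \<Rightarrow> (nat \<Rightarrow> real \<Rightarrow> real) \<Rightarrow> bool" where
  "in_Bm m \<alpha> v g \<longleftrightarrow> g 0 = v \<and>
     (\<forall>k\<le>m. weak_deriv k v (g k) \<and> in_L2w (- \<alpha> + real k) (-1 + real k) (g k))"

end

theory Submission
  imports Defs
begin

text \<open>
  Part (i) is pointwise: on (0,1), psi' t = t powr (1/gamma - 1) / gamma \<le> 1/gamma, whereas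
  omega^{-alpha,-1} \<ge> 1.

  For part (ii) let p = 1/gamma \<ge> 1. From t^p - z^p \<ge> t^(p-1) (t - z) for 0 < z < t one gets
  psi'(t) (psi t - psi z)^(-delta) \<le> (t - z)^(-delta) / gamma, so the inner product is dominated by
  the Abel form: the integral of (t - z)^(-delta) |v'(z)| |v(t)| over the triangle 0 < z < t < 1.
  Cauchy-Schwarz for the measure (t - z)^(-delta) dz dt bounds its square by the product of the
  integrals of |v'(z)|^2 (1 - z)^(1-delta) and of |v(t)|^2 t^(1-delta), each divided by 1 - delta.
  Finally (1 - z)^(1-delta) \<le> (1 - z)^(1-alpha) because delta < alpha, and
  t^(1-delta) \<le> 1 \<le> omega^{-alpha,-1}(t).
\<close>

lemma ennreal_le_of_power2_le:
  fixes x :: ennreal and y :: real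
  assumes "x\<^sup>2 \<le> ennreal (y\<^sup>2)" "0 \<le> y"
  shows "x \<le> ennreal y"
proof (cases x rule: ennreal_cases)
  case (real r)
  then have "r\<^sup>2 \<le> y\<^sup>2" using assms by (simp add: ennreal_power)
  then have "r \<le> y" using assms(2) by (rule power2_le_imp_le)
  then show ?thesis using real by (simp add: ennreal_leI)
next
  case top
  then show ?thesis using assms(1) by (simp add: power2_eq_square top_unique)
qed

lemma abs_integral_le_nn_integral:
  fixes f :: "'a \<Rightarrow> real"
  shows "ennreal \<bar>integral\<^sup>L M f\<bar> \<le> (\<integral>\<^sup>+x. ennreal \<bar>f x\<bar> \<partial>M)"
proof (cases "integrable M f")
  case True
  then show ?thesis using integral_norm_bound_ennreal[OF True] by simp
qed (simp add: not_integrable_integral_eq)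

lemma Cauchy_Schwarz_nn_integral_kernel:
  fixes k :: "'a \<Rightarrow> 'b \<Rightarrow> real" and f :: "'b \<Rightarrow> real" and h :: "'a \<Rightarrow> real"
  assumes "sigma_finite_measure N"
    and [measurable]: "case_prod k \<in> borel_measurable (M \<Otimes>\<^sub>M N)"
      "f \<in> borel_measurable N" "h \<in> borel_measurable M"
    and k_nonneg: "\<And>t z. 0 \<le> k t z"
  shows "(\<integral>\<^sup>+t. \<integral>\<^sup>+z. ennreal (k t z * \<bar>f z\<bar> * \<bar>h t\<bar>) \<partial>N \<partial>M)\<^sup>2
    \<le> (\<integral>\<^sup>+t. \<integral>\<^sup>+z. ennreal (k t z * (f z)\<^sup>2) \<partial>N \<partial>M) * (\<integral>\<^sup>+t. \<integral>\<^sup>+z. ennreal (k t z * (h t)\<^sup>2) \<partial>N \<partial>M)"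
proof -
  interpret N: sigma_finite_measure N by fact
  define A where "A = (\<lambda>(t, z). ennreal (sqrt (k t z) * \<bar>f z\<bar>))"
  define B where "B = (\<lambda>(t, z). ennreal (sqrt (k t z) * \<bar>h t\<bar>))"
  have [measurable]: "A \<in> borel_measurable (M \<Otimes>\<^sub>M N)" "B \<in> borel_measurable (M \<Otimes>\<^sub>M N)"
    unfolding A_def B_def by measurable
  have "ennreal (k t z * \<bar>f z\<bar> * \<bar>h t\<bar>) = A (t, z) * B (t, z)"
    "ennreal (k t z * (f z)\<^sup>2) = A (t, z) ^ 2" "ennreal (k t z * (h t)\<^sup>2) = B (t, z) ^ 2" for t z
    using k_nonneg[of t z]
    by (simp_all add: A_def B_def ennreal_power power_mult_distrib mult_ac flip: ennreal_mult real_sqrt_mult)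
  then have "(\<integral>\<^sup>+t. \<integral>\<^sup>+z. ennreal (k t z * \<bar>f z\<bar> * \<bar>h t\<bar>) \<partial>N \<partial>M) = (\<integral>\<^sup>+p. A p * B p \<partial>(M \<Otimes>\<^sub>M N))"
    "(\<integral>\<^sup>+t. \<integral>\<^sup>+z. ennreal (k t z * (f z)\<^sup>2) \<partial>N \<partial>M) = (\<integral>\<^sup>+p. A p ^ 2 \<partial>(M \<Otimes>\<^sub>M N))"
    "(\<integral>\<^sup>+t. \<integral>\<^sup>+z. ennreal (k t z * (h t)\<^sup>2) \<partial>N \<partial>M) = (\<integral>\<^sup>+p. B p ^ 2 \<partial>(M \<Otimes>\<^sub>M N))"
    by (simp_all only:) (rule N.nn_integral_fst; measurable)+
  then show ?thesis
    by (simp add: Cauchy_Schwarz_nn_integral)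
qed

lemma nn_integral_powr_Ioo:
  fixes L d :: real
  assumes "0 < L" "d < 1"
  shows "(\<integral>\<^sup>+s\<in>{0<..<L}. ennreal (s powr - d) \<partial>lborel) = ennreal (L powr (1 - d) / (1 - d))"
proof -
  have "((\<lambda>s. s powr - d) has_integral (L powr (- d + 1) / (- d + 1))) {0..L}"
    using assms by (intro has_integral_powr_from_0) auto
  then have "((\<lambda>s. s powr - d) has_integral (L powr (1 - d) / (1 - d))) {0<..<L}"
    by (simp add: has_integral_Icc_iff_Ioo add.commute)
  then show ?thesis
    by (intro nn_integral_has_integral_lebesgue') auto
qed

lemma omega_nonneg: "0 \<le> omega a b t"
  by (simp add: omega_def)

lemma one_le_omega_neg:
  fixes a t :: real
  assumes "0 \<le> a" "0 < t" "t < 1"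
  shows "1 \<le> omega (- a) (- 1) t"
proof -
  have "1 \<le> (1 - t) powr - a"
    using assms by (simp add: powr_minus one_le_inverse powr_le1)
  moreover have "1 \<le> t powr - 1"
    using assms by (simp add: powr_minus one_le_inverse)
  ultimately show ?thesis
    using mult_mono[of 1 "(1 - t) powr - a" 1 "t powr - 1"] by (simp add: omega_def)
qed

lemma norm_L2w_squared: "(norm_L2w a b f)\<^sup>2 = (\<integral>t\<in>{0<..<1}. (f t)\<^sup>2 * omega a b t \<partial>lborel)"
proof -
  have "0 \<le> (\<integral>t\<in>{0<..<1}. (f t)\<^sup>2 * omega a b t \<partial>lborel)"
    unfolding set_lebesgue_integral_def
    by (intro integral_nonneg_AE) (auto simp: omega_nonneg split: split_indicator)
  then show ?thesis by (simp add: norm_L2w_def)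
qed

lemma norm_L2w_nonneg: "0 \<le> norm_L2w a b f"
  using norm_L2w_squared[of a b f] by (simp add: norm_L2w_def)

lemma nn_integral_eq_norm_L2w_squared:
  assumes "in_L2w a b f"
  shows "(\<integral>\<^sup>+t\<in>{0<..<1}. ennreal ((f t)\<^sup>2 * omega a b t) \<partial>lborel) = ennreal ((norm_L2w a b f)\<^sup>2)"
proof -
  have "(\<integral>\<^sup>+t\<in>{0<..<1}. ennreal ((f t)\<^sup>2 * omega a b t) \<partial>lborel)
      = (\<integral>\<^sup>+t. ennreal (indicator {0<..<1} t *\<^sub>R ((f t)\<^sup>2 * omega a b t)) \<partial>lborel)"
    by (intro nn_integral_cong) (auto split: split_indicator)
  also have "\<dots> = ennreal (\<integral>t\<in>{0<..<1}. (f t)\<^sup>2 * omega a b t \<partial>lborel)"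
    using assms unfolding in_L2w_def set_integrable_def set_lebesgue_integral_def
    by (intro nn_integral_eq_integral) (auto simp: omega_nonneg split: split_indicator)
  finally show ?thesis
    by (simp add: norm_L2w_squared)
qed

definition abel_kernel :: "real \<Rightarrow> real \<Rightarrow> real \<Rightarrow> real" where
  "abel_kernel \<delta> t z = (if 0 < z \<and> z < t \<and> t < 1 then (t - z) powr - \<delta> else 0)"

lemma abel_kernel_nonneg: "0 \<le> abel_kernel \<delta> t z"
  by (simp add: abel_kernel_def)

lemma borel_measurable_abel_kernel [measurable]:
  "case_prod (abel_kernel \<delta>) \<in> borel_measurable (lborel \<Otimes>\<^sub>M lborel)"
  unfolding abel_kernel_def by measurable

lemma nn_integral_abel_kernel_row:
  assumes "0 < t" "t < 1" "\<delta> < 1"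
  shows "(\<integral>\<^sup>+z. ennreal (abel_kernel \<delta> t z) \<partial>lborel) = ennreal (t powr (1 - \<delta>) / (1 - \<delta>))"
proof -
  have "(\<integral>\<^sup>+z. ennreal (abel_kernel \<delta> t z) \<partial>lborel)
      = ennreal \<bar>-1\<bar> * (\<integral>\<^sup>+s. ennreal (abel_kernel \<delta> t (t + (-1) * s)) \<partial>lborel)"
    unfolding abel_kernel_def by (rule nn_integral_real_affine) auto
  also have "\<dots> = (\<integral>\<^sup>+s. ennreal (abel_kernel \<delta> t (t - s)) \<partial>lborel)"
    by simp
  also have "\<dots> = (\<integral>\<^sup>+s\<in>{0<..<t}. ennreal (s powr - \<delta>) \<partial>lborel)"
    using assms by (intro nn_integral_cong) (auto simp: abel_kernel_def split: split_indicator)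
  finally show ?thesis
    using assms by (simp add: nn_integral_powr_Ioo)
qed

lemma nn_integral_abel_kernel_column:
  assumes "0 < z" "z < 1" "\<delta> < 1"
  shows "(\<integral>\<^sup>+t. ennreal (abel_kernel \<delta> t z) \<partial>lborel) = ennreal ((1 - z) powr (1 - \<delta>) / (1 - \<delta>))"
proof -
  have "(\<integral>\<^sup>+t. ennreal (abel_kernel \<delta> t z) \<partial>lborel)
      = ennreal \<bar>1\<bar> * (\<integral>\<^sup>+s. ennreal (abel_kernel \<delta> (z + 1 * s) z) \<partial>lborel)"
    unfolding abel_kernel_def by (rule nn_integral_real_affine) auto
  also have "\<dots> = (\<integral>\<^sup>+s. ennreal (abel_kernel \<delta> (z + s) z) \<partial>lborel)"
    by simp
  also have "\<dots> = (\<integral>\<^sup>+s\<in>{0<..<1 - z}. ennreal (s powr - \<delta>) \<partial>lborel)"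
    using assms by (intro nn_integral_cong) (auto simp: abel_kernel_def split: split_indicator)
  finally show ?thesis
    using assms by (simp add: nn_integral_powr_Ioo)
qed

lemma nn_integral_abel_kernel_row_weighted_le:
  fixes h :: "real \<Rightarrow> real"
  assumes "\<delta> < 1" "0 \<le> \<alpha>" and [measurable]: "h \<in> borel_measurable borel"
  shows "(\<integral>\<^sup>+t. \<integral>\<^sup>+z. ennreal (abel_kernel \<delta> t z * (h t)\<^sup>2) \<partial>lborel \<partial>lborel)
    \<le> ennreal (1 / (1 - \<delta>)) * (\<integral>\<^sup>+t\<in>{0<..<1}. ennreal ((h t)\<^sup>2 * omega (- \<alpha>) (- 1) t) \<partial>lborel)"
proof -
  have "(\<integral>\<^sup>+z. ennreal (abel_kernel \<delta> t z * (h t)\<^sup>2) \<partial>lborel)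
      \<le> ennreal (1 / (1 - \<delta>)) * (ennreal ((h t)\<^sup>2 * omega (- \<alpha>) (- 1) t) * indicator {0<..<1} t)" for t
  proof (cases "0 < t \<and> t < 1")
    case True
    have "t powr (1 - \<delta>) \<le> omega (- \<alpha>) (- 1) t"
      using True assms one_le_omega_neg[of \<alpha> t] powr_le1[of "1 - \<delta>" t] by linarith
    then have "(h t)\<^sup>2 * (t powr (1 - \<delta>) / (1 - \<delta>)) \<le> 1 / (1 - \<delta>) * ((h t)\<^sup>2 * omega (- \<alpha>) (- 1) t)"
      using assms by (simp add: mult_left_mono divide_right_mono)
    moreover have "(\<integral>\<^sup>+z. ennreal (abel_kernel \<delta> t z * (h t)\<^sup>2) \<partial>lborel)
        = ennreal ((h t)\<^sup>2 * (t powr (1 - \<delta>) / (1 - \<delta>)))"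
    proof -
      have "(\<integral>\<^sup>+z. ennreal (abel_kernel \<delta> t z * (h t)\<^sup>2) \<partial>lborel)
          = (\<integral>\<^sup>+z. ennreal ((h t)\<^sup>2) * ennreal (abel_kernel \<delta> t z) \<partial>lborel)"
        by (simp add: mult.commute[of "abel_kernel _ _ _"] ennreal_mult')
      also have "\<dots> = ennreal ((h t)\<^sup>2) * (\<integral>\<^sup>+z. ennreal (abel_kernel \<delta> t z) \<partial>lborel)"
        by (rule nn_integral_cmult) measurable
      finally show ?thesis
        using True assms by (simp add: nn_integral_abel_kernel_row flip: ennreal_mult')
    qed
    ultimately show ?thesis
      using True assms by (simp add: ennreal_leI omega_nonneg flip: ennreal_mult)
  next
    case False
    then have "abel_kernel \<delta> t z = 0" for z
      by (auto simp: abel_kernel_def)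
    then show ?thesis by simp
  qed
  then have "(\<integral>\<^sup>+t. \<integral>\<^sup>+z. ennreal (abel_kernel \<delta> t z * (h t)\<^sup>2) \<partial>lborel \<partial>lborel)
      \<le> (\<integral>\<^sup>+t. ennreal (1 / (1 - \<delta>)) * (ennreal ((h t)\<^sup>2 * omega (- \<alpha>) (- 1) t) * indicator {0<..<1} t) \<partial>lborel)"
    by (intro nn_integral_mono)
  also have "\<dots> = ennreal (1 / (1 - \<delta>)) * (\<integral>\<^sup>+t\<in>{0<..<1}. ennreal ((h t)\<^sup>2 * omega (- \<alpha>) (- 1) t) \<partial>lborel)"
    unfolding omega_def by (rule nn_integral_cmult) measurable
  finally show ?thesis .
qed

lemma nn_integral_abel_kernel_column_weighted_le:
  fixes f :: "real \<Rightarrow> real"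
  assumes "\<delta> < 1" "\<delta> \<le> \<alpha>" and [measurable]: "f \<in> borel_measurable borel"
  shows "(\<integral>\<^sup>+t. \<integral>\<^sup>+z. ennreal (abel_kernel \<delta> t z * (f z)\<^sup>2) \<partial>lborel \<partial>lborel)
    \<le> ennreal (1 / (1 - \<delta>)) * (\<integral>\<^sup>+z\<in>{0<..<1}. ennreal ((f z)\<^sup>2 * omega (1 - \<alpha>) 0 z) \<partial>lborel)"
proof -
  have "(\<integral>\<^sup>+t. ennreal (abel_kernel \<delta> t z * (f z)\<^sup>2) \<partial>lborel)
      \<le> ennreal (1 / (1 - \<delta>)) * (ennreal ((f z)\<^sup>2 * omega (1 - \<alpha>) 0 z) * indicator {0<..<1} z)" for z
  proof (cases "0 < z \<and> z < 1")
    case True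
    have "(1 - z) powr (1 - \<delta>) \<le> omega (1 - \<alpha>) 0 z"
      using True assms by (simp add: omega_def powr_mono')
    then have "(f z)\<^sup>2 * ((1 - z) powr (1 - \<delta>) / (1 - \<delta>)) \<le> 1 / (1 - \<delta>) * ((f z)\<^sup>2 * omega (1 - \<alpha>) 0 z)"
      using assms by (simp add: mult_left_mono divide_right_mono)
    moreover have "(\<integral>\<^sup>+t. ennreal (abel_kernel \<delta> t z * (f z)\<^sup>2) \<partial>lborel)
        = ennreal ((f z)\<^sup>2 * ((1 - z) powr (1 - \<delta>) / (1 - \<delta>)))"
    proof -
      have "(\<integral>\<^sup>+t. ennreal (abel_kernel \<delta> t z * (f z)\<^sup>2) \<partial>lborel)
          = (\<integral>\<^sup>+t. ennreal ((f z)\<^sup>2) * ennreal (abel_kernel \<delta> t z) \<partial>lborel)"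
        by (simp add: mult.commute[of "abel_kernel _ _ _"] ennreal_mult')
      also have "\<dots> = ennreal ((f z)\<^sup>2) * (\<integral>\<^sup>+t. ennreal (abel_kernel \<delta> t z) \<partial>lborel)"
        by (rule nn_integral_cmult) measurable
      finally show ?thesis
        using True assms by (simp add: nn_integral_abel_kernel_column flip: ennreal_mult')
    qed
    ultimately show ?thesis
      using True assms by (simp add: ennreal_leI omega_nonneg flip: ennreal_mult)
  next
    case False
    then have "abel_kernel \<delta> t z = 0" for t
      by (auto simp: abel_kernel_def)
    then show ?thesis by simp
  qed
  then have "(\<integral>\<^sup>+z. \<integral>\<^sup>+t. ennreal (abel_kernel \<delta> t z * (f z)\<^sup>2) \<partial>lborel \<partial>lborel)
      \<le> (\<integral>\<^sup>+z. ennreal (1 / (1 - \<delta>)) * (ennreal ((f z)\<^sup>2 * omega (1 - \<alpha>) 0 z) * indicator {0<..<1} z) \<partial>lborel)"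
    by (intro nn_integral_mono)
  also have "\<dots> = ennreal (1 / (1 - \<delta>)) * (\<integral>\<^sup>+z\<in>{0<..<1}. ennreal ((f z)\<^sup>2 * omega (1 - \<alpha>) 0 z) \<partial>lborel)"
    unfolding omega_def by (rule nn_integral_cmult) measurable
  finally show ?thesis
    by (subst lborel_pair.Fubini') measurable
qed

lemma psi_d_mult_powr_psi_diff_le:
  assumes "0 < \<gamma>" "\<gamma> \<le> 1" "0 \<le> \<delta>" "\<delta> \<le> 1" "0 < z" "z < t" "t < 1"
  shows "psi_d \<gamma> t * (psi \<gamma> t - psi \<gamma> z) powr - \<delta> \<le> 1 / \<gamma> * (t - z) powr - \<delta>"
proof -
  define p where "p = 1 / \<gamma>"
  have p: "1 \<le> p" using assms by (simp add: p_def)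
  have psi: "psi \<gamma> t = t powr p" "psi \<gamma> z = z powr p" and psi_d: "psi_d \<gamma> t = p * t powr (p - 1)"
    using assms by (auto simp: psi_def psi_d_def p_def)
  define A where "A = t powr (p - 1) * (t - z)"
  have "0 < A" using assms by (simp add: A_def)
  have "z powr (p - 1) \<le> t powr (p - 1)"
    using assms p by (intro powr_mono2) auto
  then have "A \<le> t powr (p - 1) * t - z powr (p - 1) * z"
    using assms by (simp add: A_def algebra_simps mult_right_mono)
  also have "\<dots> = psi \<gamma> t - psi \<gamma> z"
    using assms by (simp add: psi powr_diff)
  finally have "(psi \<gamma> t - psi \<gamma> z) powr - \<delta> \<le> A powr - \<delta>"
    using \<open>0 < A\<close> assms by (intro powr_mono2') auto
  also have "A powr - \<delta> = (t powr (p - 1)) powr - \<delta> * (t - z) powr - \<delta>"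
    unfolding A_def using assms by (intro powr_mult)
  also have "(t powr (p - 1)) powr - \<delta> = t powr ((1 - p) * \<delta>)"
    by (simp add: powr_powr algebra_simps)
  finally have "psi_d \<gamma> t * (psi \<gamma> t - psi \<gamma> z) powr - \<delta>
      \<le> p * t powr (p - 1) * (t powr ((1 - p) * \<delta>) * (t - z) powr - \<delta>)"
    unfolding psi_d using p by (intro mult_left_mono) auto
  also have "\<dots> = p * t powr ((p - 1) * (1 - \<delta>)) * (t - z) powr - \<delta>"
    using assms by (simp add: powr_add[symmetric] algebra_simps)
  also have "\<dots> \<le> p * (t - z) powr - \<delta>"
    using assms p mult_right_mono[of "t powr ((p - 1) * (1 - \<delta>))" 1 "(t - z) powr - \<delta>"]
    by (simp add: powr_le1)
  finally show ?thesis by (simp add: p_def)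
qed

lemma psi_d_mult_abs_caputo_psi_le:
  fixes g :: "real \<Rightarrow> real"
  assumes "0 < \<gamma>" "\<gamma> \<le> 1" "0 < \<delta>" "\<delta> < 1" "0 < t" "t < 1"
    and [measurable]: "g \<in> borel_measurable borel"
  shows "ennreal (psi_d \<gamma> t * \<bar>caputo_psi \<gamma> \<delta> g t\<bar>)
    \<le> ennreal (1 / \<gamma> / Gamma (1 - \<delta>)) * (\<integral>\<^sup>+z. ennreal (abel_kernel \<delta> t z * \<bar>g z\<bar>) \<partial>lborel)"
proof -
  define F where "F = (\<lambda>z. indicator {0<..<t} z *\<^sub>R ((psi \<gamma> t - psi \<gamma> z) powr - \<delta> * g z))"
  have [measurable]: "F \<in> borel_measurable borel"
    unfolding F_def psi_def by measurable
  define a where "a = psi_d \<gamma> t / Gamma (1 - \<delta>)"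
  have "0 < Gamma (1 - \<delta>)" "0 \<le> psi_d \<gamma> t"
    using assms by (simp_all add: psi_d_def)
  then have "0 \<le> a" by (simp add: a_def)
  have "ennreal (psi_d \<gamma> t * \<bar>caputo_psi \<gamma> \<delta> g t\<bar>) = ennreal a * ennreal \<bar>integral\<^sup>L lborel F\<bar>"
    using \<open>0 < Gamma (1 - \<delta>)\<close> \<open>0 \<le> a\<close>
    by (simp add: caputo_psi_def set_lebesgue_integral_def F_def a_def abs_mult flip: ennreal_mult)
  also have "\<dots> \<le> ennreal a * (\<integral>\<^sup>+z. ennreal \<bar>F z\<bar> \<partial>lborel)"
    by (intro mult_left_mono abs_integral_le_nn_integral) simp
  also have "\<dots> = (\<integral>\<^sup>+z. ennreal a * ennreal \<bar>F z\<bar> \<partial>lborel)"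
    by (rule nn_integral_cmult[symmetric]) measurable
  also have "\<dots> \<le> (\<integral>\<^sup>+z. ennreal (1 / \<gamma> / Gamma (1 - \<delta>)) * ennreal (abel_kernel \<delta> t z * \<bar>g z\<bar>) \<partial>lborel)"
  proof (intro nn_integral_mono)
    fix z
    show "ennreal a * ennreal \<bar>F z\<bar> \<le> ennreal (1 / \<gamma> / Gamma (1 - \<delta>)) * ennreal (abel_kernel \<delta> t z * \<bar>g z\<bar>)"
    proof (cases "0 < z \<and> z < t")
      case True
      have "a * \<bar>F z\<bar> = psi_d \<gamma> t * (psi \<gamma> t - psi \<gamma> z) powr - \<delta> * \<bar>g z\<bar> / Gamma (1 - \<delta>)"
        using True by (simp add: a_def F_def abs_mult)
      also have "\<dots> \<le> 1 / \<gamma> * (t - z) powr - \<delta> * \<bar>g z\<bar> / Gamma (1 - \<delta>)"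
        using True assms \<open>0 < Gamma (1 - \<delta>)\<close> psi_d_mult_powr_psi_diff_le[of \<gamma> \<delta> z t]
        by (intro divide_right_mono mult_right_mono) auto
      also have "\<dots> = 1 / \<gamma> / Gamma (1 - \<delta>) * (abel_kernel \<delta> t z * \<bar>g z\<bar>)"
        using True assms by (simp add: abel_kernel_def)
      finally have "ennreal (a * \<bar>F z\<bar>) \<le> ennreal (1 / \<gamma> / Gamma (1 - \<delta>) * (abel_kernel \<delta> t z * \<bar>g z\<bar>))"
        by (rule ennreal_leI)
      moreover have "0 \<le> 1 / \<gamma> / Gamma (1 - \<delta>)"
        using assms \<open>0 < Gamma (1 - \<delta>)\<close> by simp
      ultimately show ?thesis
        using \<open>0 \<le> a\<close> by (simp only: ennreal_mult')
    qed (simp add: F_def)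
  qed
  also have "\<dots> = ennreal (1 / \<gamma> / Gamma (1 - \<delta>)) * (\<integral>\<^sup>+z. ennreal (abel_kernel \<delta> t z * \<bar>g z\<bar>) \<partial>lborel)"
    by (rule nn_integral_cmult) measurable
  finally show ?thesis .
qed

lemma abs_inner_L2psi_caputo_psi_le:
  fixes g v :: "real \<Rightarrow> real"
  assumes "0 < \<gamma>" "\<gamma> \<le> 1" "0 < \<delta>" "\<delta> < 1"
    and [measurable]: "g \<in> borel_measurable borel" "v \<in> borel_measurable borel"
  shows "ennreal \<bar>inner_L2psi \<gamma> (caputo_psi \<gamma> \<delta> g) v\<bar>
    \<le> ennreal (1 / \<gamma> / Gamma (1 - \<delta>))
      * (\<integral>\<^sup>+t. \<integral>\<^sup>+z. ennreal (abel_kernel \<delta> t z * \<bar>g z\<bar> * \<bar>v t\<bar>) \<partial>lborel \<partial>lborel)"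
proof -
  define c where "c = 1 / \<gamma> / Gamma (1 - \<delta>)"
  have "ennreal \<bar>inner_L2psi \<gamma> (caputo_psi \<gamma> \<delta> g) v\<bar>
      \<le> (\<integral>\<^sup>+t. ennreal \<bar>indicator {0<..<1} t *\<^sub>R (caputo_psi \<gamma> \<delta> g t * v t * psi_d \<gamma> t)\<bar> \<partial>lborel)"
    unfolding inner_L2psi_def set_lebesgue_integral_def by (rule abs_integral_le_nn_integral)
  also have "\<dots> \<le> (\<integral>\<^sup>+t. ennreal c * (\<integral>\<^sup>+z. ennreal (abel_kernel \<delta> t z * \<bar>g z\<bar>) \<partial>lborel) * ennreal \<bar>v t\<bar> \<partial>lborel)"
  proof (intro nn_integral_mono)
    fix t
    show "ennreal \<bar>indicator {0<..<1} t *\<^sub>R (caputo_psi \<gamma> \<delta> g t * v t * psi_d \<gamma> t)\<bar>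
      \<le> ennreal c * (\<integral>\<^sup>+z. ennreal (abel_kernel \<delta> t z * \<bar>g z\<bar>) \<partial>lborel) * ennreal \<bar>v t\<bar>"
    proof (cases "0 < t \<and> t < 1")
      case True
      then have "ennreal \<bar>indicator {0<..<1} t *\<^sub>R (caputo_psi \<gamma> \<delta> g t * v t * psi_d \<gamma> t)\<bar>
          = ennreal (psi_d \<gamma> t * \<bar>caputo_psi \<gamma> \<delta> g t\<bar>) * ennreal \<bar>v t\<bar>"
        using assms by (simp add: psi_d_def abs_mult mult_ac flip: ennreal_mult)
      then show ?thesis
        using True assms psi_d_mult_abs_caputo_psi_le[of \<gamma> \<delta> t g] unfolding c_def
        by (simp add: mult_right_mono)
    qed simp
  qed
  also have "\<dots> = ennreal c * (\<integral>\<^sup>+t. \<integral>\<^sup>+z. ennreal (abel_kernel \<delta> t z * \<bar>g z\<bar> * \<bar>v t\<bar>) \<partial>lborel \<partial>lborel)"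
    by (simp add: mult.assoc nn_integral_cmult ennreal_mult'' flip: nn_integral_multc)
  finally show ?thesis by (simp add: c_def)
qed

lemma in_L2w_restrict_01:
  assumes "in_L2w a b f"
  defines "f\<^sub>0 \<equiv> \<lambda>t. indicator {0<..<1} t *\<^sub>R f t"
  shows "f\<^sub>0 \<in> borel_measurable borel" "in_L2w a b f\<^sub>0" "norm_L2w a b f\<^sub>0 = norm_L2w a b f"
proof -
  show "f\<^sub>0 \<in> borel_measurable borel"
    using assms unfolding in_L2w_def set_borel_measurable_def by simp
  have "set_integrable lborel {0<..<1} (\<lambda>t. (f\<^sub>0 t)\<^sup>2 * omega a b t)
      \<longleftrightarrow> set_integrable lborel {0<..<1} (\<lambda>t. (f t)\<^sup>2 * omega a b t)"
    by (intro set_integrable_cong) (simp_all add: f\<^sub>0_def)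
  moreover have "(\<lambda>t. indicator {0<..<1} t *\<^sub>R f\<^sub>0 t) = f\<^sub>0"
    by (auto simp: f\<^sub>0_def split: split_indicator)
  ultimately show "in_L2w a b f\<^sub>0"
    using assms \<open>f\<^sub>0 \<in> borel_measurable borel\<close> unfolding in_L2w_def set_borel_measurable_def
    by simp
  show "norm_L2w a b f\<^sub>0 = norm_L2w a b f"
    unfolding norm_L2w_def f\<^sub>0_def by (simp add: set_lebesgue_integral_cong)
qed

lemma nn_integral_abel_kernel_le_norms:
  fixes f h :: "real \<Rightarrow> real"
  assumes "0 \<le> \<delta>" "\<delta> < 1" "\<delta> \<le> \<alpha>"
    and [measurable]: "f \<in> borel_measurable borel" "h \<in> borel_measurable borel"
    and f: "in_L2w (1 - \<alpha>) 0 f" and h: "in_L2w (- \<alpha>) (- 1) h"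
  shows "(\<integral>\<^sup>+t. \<integral>\<^sup>+z. ennreal (abel_kernel \<delta> t z * \<bar>f z\<bar> * \<bar>h t\<bar>) \<partial>lborel \<partial>lborel)
    \<le> ennreal (1 / (1 - \<delta>) * norm_L2w (1 - \<alpha>) 0 f * norm_L2w (- \<alpha>) (- 1) h)"
    (is "?X \<le> ennreal (?a * ?F * ?H)")
proof (rule ennreal_le_of_power2_le)
  have "?X\<^sup>2 \<le> (\<integral>\<^sup>+t. \<integral>\<^sup>+z. ennreal (abel_kernel \<delta> t z * (f z)\<^sup>2) \<partial>lborel \<partial>lborel)
      * (\<integral>\<^sup>+t. \<integral>\<^sup>+z. ennreal (abel_kernel \<delta> t z * (h t)\<^sup>2) \<partial>lborel \<partial>lborel)"
    by (rule Cauchy_Schwarz_nn_integral_kernel[OF lborel.sigma_finite_measure_axioms])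
      (simp_all add: abel_kernel_nonneg)
  also have "\<dots> \<le> (ennreal ?a * ennreal (?F\<^sup>2)) * (ennreal ?a * ennreal (?H\<^sup>2))"
    using assms
      nn_integral_abel_kernel_column_weighted_le[of \<delta> \<alpha> f, unfolded nn_integral_eq_norm_L2w_squared[OF f]]
      nn_integral_abel_kernel_row_weighted_le[of \<delta> \<alpha> h, unfolded nn_integral_eq_norm_L2w_squared[OF h]]
    by (intro mult_mono) simp_all
  also have "\<dots> = ennreal (?a * ?F\<^sup>2 * (?a * ?H\<^sup>2))"
    using assms by (simp only: ennreal_mult' mult_nonneg_nonneg zero_le_power2 zero_le_divide_1_iff
        diff_ge_0_iff_ge less_imp_le)
  also have "\<dots> = ennreal ((?a * ?F * ?H)\<^sup>2)"
    by (simp add: power2_eq_square mult_ac)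
  finally show "?X\<^sup>2 \<le> ennreal ((?a * ?F * ?H)\<^sup>2)" .
  show "0 \<le> ?a * ?F * ?H"
    using assms norm_L2w_nonneg by simp
qed

lemma inner_L2psi_caputo_psi_le:
  assumes "0 < \<gamma>" "\<gamma> \<le> 1" "0 < \<delta>" "\<delta> < 1" "\<delta> \<le> \<alpha>"
    and g: "in_L2w (1 - \<alpha>) 0 g" and v: "in_L2w (- \<alpha>) (- 1) v"
  shows "inner_L2psi \<gamma> (caputo_psi \<gamma> \<delta> g) v
    \<le> 1 / \<gamma> / Gamma (1 - \<delta>) / (1 - \<delta>) * norm_L2w (1 - \<alpha>) 0 g * norm_L2w (- \<alpha>) (- 1) v"
proof -
  define c where "c = 1 / \<gamma> / Gamma (1 - \<delta>)"
  define B where "B = 1 / (1 - \<delta>) * norm_L2w (1 - \<alpha>) 0 g * norm_L2w (- \<alpha>) (- 1) v"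
  have "0 \<le> c" "0 \<le> B"
    using assms norm_L2w_nonneg by (simp_all add: c_def B_def)
  \<comment> \<open>The hypotheses give measurability on (0,1) only, and the kernel never looks outside (0,1).\<close>
  define g\<^sub>0 where "g\<^sub>0 = (\<lambda>z. indicator {0<..<1} z *\<^sub>R g z)"
  define v\<^sub>0 where "v\<^sub>0 = (\<lambda>t. indicator {0<..<1} t *\<^sub>R v t)"
  note g\<^sub>0 = in_L2w_restrict_01[OF g, folded g\<^sub>0_def]
  note v\<^sub>0 = in_L2w_restrict_01[OF v, folded v\<^sub>0_def]
  have "inner_L2psi \<gamma> (caputo_psi \<gamma> \<delta> g) v = inner_L2psi \<gamma> (caputo_psi \<gamma> \<delta> g\<^sub>0) v\<^sub>0"
    unfolding inner_L2psi_def caputo_psi_def g\<^sub>0_def v\<^sub>0_def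
    by (intro set_lebesgue_integral_cong) (auto intro!: set_lebesgue_integral_cong)
  then have "ennreal \<bar>inner_L2psi \<gamma> (caputo_psi \<gamma> \<delta> g) v\<bar>
      \<le> ennreal c * (\<integral>\<^sup>+t. \<integral>\<^sup>+z. ennreal (abel_kernel \<delta> t z * \<bar>g\<^sub>0 z\<bar> * \<bar>v\<^sub>0 t\<bar>) \<partial>lborel \<partial>lborel)"
    unfolding c_def using abs_inner_L2psi_caputo_psi_le[OF assms(1-4) g\<^sub>0(1) v\<^sub>0(1)] by simp
  also have "\<dots> \<le> ennreal c * ennreal B"
    using nn_integral_abel_kernel_le_norms[of \<delta> \<alpha> g\<^sub>0 v\<^sub>0] assms g\<^sub>0 v\<^sub>0
    by (intro mult_left_mono) (simp_all add: B_def)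
  also have "\<dots> = ennreal (c * B)"
    using \<open>0 \<le> c\<close> by (rule ennreal_mult'[symmetric])
  finally have "\<bar>inner_L2psi \<gamma> (caputo_psi \<gamma> \<delta> g) v\<bar> \<le> c * B"
    using \<open>0 \<le> c\<close> \<open>0 \<le> B\<close> by (subst (asm) ennreal_le_iff) simp_all
  then show ?thesis
    by (simp add: c_def B_def)
qed

lemma norm_L2psi_le:
  assumes "0 < \<gamma>" "\<gamma> \<le> 1" "0 \<le> \<alpha>" and v: "in_L2w (- \<alpha>) (- 1) v"
  shows "norm_L2psi \<gamma> v \<le> sqrt (1 / \<gamma>) * norm_L2w (- \<alpha>) (- 1) v"
proof -
  have pointwise: "v t * v t * psi_d \<gamma> t \<le> 1 / \<gamma> * ((v t)\<^sup>2 * omega (- \<alpha>) (- 1) t)"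
    if "t \<in> {0<..<1}" for t
  proof -
    have "\<bar>t\<bar> powr (1 / \<gamma> - 1) \<le> omega (- \<alpha>) (- 1) t"
      using that assms one_le_omega_neg[of \<alpha> t] powr_le1[of "1 / \<gamma> - 1" "\<bar>t\<bar>"] by auto
    then have "(v t)\<^sup>2 * \<bar>t\<bar> powr (1 / \<gamma> - 1) \<le> (v t)\<^sup>2 * omega (- \<alpha>) (- 1) t"
      by (rule mult_left_mono) simp
    then show ?thesis
      using assms by (simp add: psi_d_def power2_eq_square divide_right_mono mult_ac)
  qed
  have "inner_L2psi \<gamma> v v \<le> 1 / \<gamma> * (norm_L2w (- \<alpha>) (- 1) v)\<^sup>2"
  proof (cases "set_integrable lborel {0<..<1} (\<lambda>t. v t * v t * psi_d \<gamma> t)")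
    case True
    then show ?thesis
      using v pointwise unfolding inner_L2psi_def norm_L2w_squared in_L2w_def
      by (subst set_integral_mult_right[symmetric]) (rule set_integral_mono; simp)
  next
    case False
    then have "inner_L2psi \<gamma> v v = 0"
      by (simp add: inner_L2psi_def set_lebesgue_integral_def set_integrable_def not_integrable_integral_eq)
    then show ?thesis
      using assms by simp
  qed
  then have "norm_L2psi \<gamma> v \<le> sqrt (1 / \<gamma> * (norm_L2w (- \<alpha>) (- 1) v)\<^sup>2)"
    by (simp add: norm_L2psi_def)
  then show ?thesis
    unfolding real_sqrt_mult using norm_L2w_nonneg by simp
qed

theorem lemma3p4:
  fixes \<gamma> \<delta> \<alpha> :: real and m :: nat
  assumes "0 < \<gamma>" "\<gamma> \<le> 1" "0 < \<delta>" "\<delta> < 1" "\<delta> < \<alpha>" "\<alpha> < 1" "m \<ge> 1"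
  shows "\<exists>c. \<forall>v g. in_0H \<gamma> \<delta> v \<and> in_Bm m \<alpha> v g \<longrightarrow>
           norm_L2psi \<gamma> v \<le> c * norm_L2w (- \<alpha>) (-1) v \<and>
           inner_L2psi \<gamma> (caputo_psi \<gamma> \<delta> (g 1)) v
             \<le> c * norm_L2w (1 - \<alpha>) 0 (g 1) * norm_L2w (- \<alpha>) (-1) v"
proof -
  define c where "c = max (sqrt (1 / \<gamma>)) (1 / \<gamma> / Gamma (1 - \<delta>) / (1 - \<delta>))"
  show ?thesis
  proof (intro exI[of _ c] allI impI conjI)
    fix v g
    assume "in_0H \<gamma> \<delta> v \<and> in_Bm m \<alpha> v g"
    then have Bm: "g 0 = v" "\<And>k. k \<le> m \<Longrightarrow> in_L2w (- \<alpha> + real k) (- 1 + real k) (g k)"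
      unfolding in_Bm_def by auto
    then have v: "in_L2w (- \<alpha>) (- 1) v" and g: "in_L2w (1 - \<alpha>) 0 (g 1)"
      using Bm(2)[of 0] Bm(2)[of 1] \<open>m \<ge> 1\<close> by (simp_all add: add.commute)
    have "norm_L2psi \<gamma> v \<le> sqrt (1 / \<gamma>) * norm_L2w (- \<alpha>) (- 1) v"
      using assms v by (intro norm_L2psi_le) auto
    also have "\<dots> \<le> c * norm_L2w (- \<alpha>) (- 1) v"
      unfolding c_def by (intro mult_right_mono norm_L2w_nonneg) simp
    finally show "norm_L2psi \<gamma> v \<le> c * norm_L2w (- \<alpha>) (- 1) v" .
    have "inner_L2psi \<gamma> (caputo_psi \<gamma> \<delta> (g 1)) v
        \<le> 1 / \<gamma> / Gamma (1 - \<delta>) / (1 - \<delta>) * norm_L2w (1 - \<alpha>) 0 (g 1) * norm_L2w (- \<alpha>) (- 1) v"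
      using assms g v by (intro inner_L2psi_caputo_psi_le) auto
    also have "\<dots> \<le> c * norm_L2w (1 - \<alpha>) 0 (g 1) * norm_L2w (- \<alpha>) (- 1) v"
      unfolding c_def by (intro mult_right_mono norm_L2w_nonneg) simp_all
    finally show "inner_L2psi \<gamma> (caputo_psi \<gamma> \<delta> (g 1)) v
        \<le> c * norm_L2w (1 - \<alpha>) 0 (g 1) * norm_L2w (- \<alpha>) (- 1) v" .
  qed
qed

end
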